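(* Consider the liquidation problem of the context, let $t\in[0,T)$ and $x\in\mathbb{R}^n$, and write $v(t,x;\Lambda)$ for the value function as a function of the price impact matrix. (i) $v(t,x;\Lambda)$ is increasing in $\Lambda$, i.e. $\Lambda\le\tilde\Lambda$ (in the Loewner order) implies $v(t,x;\Lambda)\le v(t,x;\tilde\Lambda)$. (ii) Let $\Lambda=\operatorname{diag}(\lambda_1,\dots,\lambda_n)$. For $i=1,\dots,n$, $v(t,x;\lambda_i)/\lambda_i$ is decreasing in $\lambda_i$ (the other parameters held fixed).
   Context: Model: fix $T>0$, $n\ge1$, $\alpha\ge0$, a symmetric positive definite $\Lambda\in\mathbb{R}^{n\times n}$ and a symmetric nonnegative definite $\Sigma$. On a filtered probability space, $\tilde P$ is an $n$-dimensional square-integrable càdlàg martingale with $\mathrm{Cov}(\tilde P_i(t),\tilde P_j(t))=t\Sigma_{i,j}$, and $\pi=(\pi_1,\dots,\pi_n)$ has independent Poisson components with intensities $\theta_i\ge0$, independent of $\tilde P$; filtration = completion of $\sigma(\tilde P(s),\pi(r):s\le t,r<t)$. Strategies $u=(\xi,\eta)$ on $[t,T)$ ($\xi$ progressively measurable, $\eta$ predictable) control $dX^u=-\xi ds-\eta\,d\pi$, $X^u(t)=x$; $\mathbb{A}(t,x)$ consists of those with a unique solution, $\mathbb{E}\int_t^T\|\xi\|_2^4<\infty$, $\mathbb{E}\int_t^T\|\eta\|_2^8<\infty$, $\eta_i\equiv0$ if $\theta_i=0$, and $\lim_{s\to T-}X^u(s)=0$ a.s. The value function is $v(t,x)=\inf_{u\in\mathbb{A}(t,x)}\mathbb{E}\big[\int_t^T(\xi^\top\Lambda\xi+\alpha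 X^{u\top}\Sigma X^u)ds\big]$. *)

theory Defs
  imports "HOL-Probability.Probability"
begin

definition sym_mat :: "real^'n^'n \<Rightarrow> bool" where
  "sym_mat A \<longleftrightarrow> transpose A = A"

definition pos_def_mat :: "real^'n^'n \<Rightarrow> bool" where
  "pos_def_mat A \<longleftrightarrow> sym_mat A \<and> (\<forall>x. x \<noteq> 0 \<longrightarrow> 0 < x \<bullet> (A *v x))"

definition nonneg_def_mat :: "real^'n^'n \<Rightarrow> bool" where
  "nonneg_def_mat A \<longleftrightarrow> sym_mat A \<and> (\<forall>x. 0 \<le> x \<bullet> (A *v x))"

definition loewner_le :: "real^'n^'n \<Rightarrow> real^'n^'n \<Rightarrow> bool" where
  "loewner_le A B \<longleftrightarrow> nonneg_def_mat (B - A)"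

definition diag_mat :: "('n \<Rightarrow> real) \<Rightarrow> real^'n^'n" where
  "diag_mat d = (\<chi> i j. if i = j then d i else 0)"

definition cadlag_on :: "real \<Rightarrow> (real \<Rightarrow> 'a::topological_space) \<Rightarrow> bool" where
  "cadlag_on T f \<longleftrightarrow>
     (\<forall>s\<in>{0..<T}. (f \<longlongrightarrow> f s) (at_right s)) \<and>
     (\<forall>s\<in>{0<..T}. \<exists>l. (f \<longlongrightarrow> l) (at_left s))"

definition left_lim :: "(real \<Rightarrow> 'a::t2_space) \<Rightarrow> real \<Rightarrow> 'a" where
  "left_lim f s = Lim (at_left s) f"

definition liq_filtration ::
  "'w measure \<Rightarrow> (real \<Rightarrow> 'w \<Rightarrow> real^'n) \<Rightarrow> (real \<Rightarrow> 'w \<Rightarrow> real^'n) \<Rightarrow> real \<Rightarrow> 'w set set" where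
  "liq_filtration M P N s = sigma_sets (space M)
     ({P r -` B \<inter> space M | r B. 0 \<le> r \<and> r \<le> s \<and> B \<in> sets borel}
    \<union> {N r -` B \<inter> space M | r B. 0 \<le> r \<and> r < s \<and> B \<in> sets borel}
    \<union> {A. A \<subseteq> space M \<and> (\<exists>Z\<in>null_sets M. A \<subseteq> Z)})"

definition sq_int_cadlag_martingale ::
  "'w measure \<Rightarrow> (real \<Rightarrow> 'w set set) \<Rightarrow> real \<Rightarrow> (real \<Rightarrow> 'w \<Rightarrow> real^'n) \<Rightarrow> bool" where
  "sq_int_cadlag_martingale M F T X \<longleftrightarrow>
     (\<forall>s\<in>{0..T}. X s \<in> borel_measurable M) \<and>
     (\<forall>s\<in>{0..T}. \<forall>i. integrable M (\<lambda>\<omega>. (X s \<omega> $ i)^2)) \<and>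
     (\<forall>s\<in>{0..T}. X s \<in> measurable (sigma (space M) (F s)) borel) \<and>
     (\<forall>\<omega>\<in>space M. cadlag_on T (\<lambda>s. X s \<omega>)) \<and>
     (\<forall>r s i. 0 \<le> r \<longrightarrow> r \<le> s \<longrightarrow> s \<le> T \<longrightarrow> (\<forall>A\<in>F r.
        (\<integral>\<omega>. indicator A \<omega> * (X s \<omega> $ i) \<partial>completion M)
      = (\<integral>\<omega>. indicator A \<omega> * (X r \<omega> $ i) \<partial>completion M)))"

definition poisson_process_on ::
  "'w measure \<Rightarrow> real \<Rightarrow> real \<Rightarrow> (real \<Rightarrow> 'w \<Rightarrow> real) \<Rightarrow> bool" where
  "poisson_process_on M T th N \<longleftrightarrow>
     (\<forall>s\<in>{0..T}. N s \<in> borel_measurable M) \<and>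
     (\<forall>\<omega>\<in>space M. N 0 \<omega> = 0 \<and> cadlag_on T (\<lambda>s. N s \<omega>)) \<and>
     (\<forall>r s (k::nat). 0 \<le> r \<longrightarrow> r \<le> s \<longrightarrow> s \<le> T \<longrightarrow>
        measure M {\<omega>\<in>space M. N s \<omega> - N r \<omega> = real k}
          = exp (- (th * (s - r))) * (th * (s - r)) ^ k / fact k) \<and>
     (\<forall>(k::nat) (ts::nat \<Rightarrow> real). 0 \<le> ts 0 \<longrightarrow> (\<forall>j<k. ts j < ts (Suc j)) \<longrightarrow> ts k \<le> T \<longrightarrow>
        prob_space.indep_vars M (\<lambda>_. borel) (\<lambda>j \<omega>. N (ts (Suc j)) \<omega> - N (ts j) \<omega>) {..<k})"

text \<open>Sigma-algebras generated by P (index None) and by the components of pi (index Some i).\<close>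
definition liq_gen_sigma ::
  "'w measure \<Rightarrow> real \<Rightarrow> (real \<Rightarrow> 'w \<Rightarrow> real^'n) \<Rightarrow> (real \<Rightarrow> 'w \<Rightarrow> real^'n) \<Rightarrow> 'n option \<Rightarrow> 'w set set" where
  "liq_gen_sigma M T P N k = (case k of
      None \<Rightarrow> sigma_sets (space M) {P s -` B \<inter> space M | s B. s \<in> {0..T} \<and> B \<in> sets borel}
    | Some i \<Rightarrow> sigma_sets (space M)
        {(\<lambda>\<omega>. N s \<omega> $ i) -` B \<inter> space M | s B. s \<in> {0..T} \<and> B \<in> sets borel})"

definition liq_model ::
  "'w measure \<Rightarrow> real \<Rightarrow> real^'n^'n \<Rightarrow> ('n \<Rightarrow> real) \<Rightarrow> (real \<Rightarrow> 'w \<Rightarrow> real^'n) \<Rightarrow> (real \<Rightarrow> 'w \<Rightarrow> real^'n) \<Rightarrow> bool" where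
  "liq_model M T Sig th P N \<longleftrightarrow>
     prob_space M \<and>
     sq_int_cadlag_martingale M (liq_filtration M P N) T P \<and>
     (\<forall>s\<in>{0..T}. \<forall>i j.
        (\<integral>\<omega>. (P s \<omega> $ i - (\<integral>\<omega>'. P s \<omega>' $ i \<partial>M)) * (P s \<omega> $ j - (\<integral>\<omega>'. P s \<omega>' $ j \<partial>M)) \<partial>M)
          = s * Sig $ i $ j) \<and>
     (\<forall>i. poisson_process_on M T (th i) (\<lambda>s \<omega>. N s \<omega> $ i)) \<and>
     prob_space.indep_sets M (liq_gen_sigma M T P N) UNIV"

definition progressive ::
  "'w measure \<Rightarrow> (real \<Rightarrow> 'w set set) \<Rightarrow> real \<Rightarrow> real \<Rightarrow> (real \<Rightarrow> 'w \<Rightarrow> real^'n) \<Rightarrow> bool" where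
  "progressive M F t T xi \<longleftrightarrow>
     (\<forall>s\<in>{t..<T}. (\<lambda>(r, \<omega>). xi r \<omega>) \<in>
        borel_measurable (restrict_space lborel {t..s} \<Otimes>\<^sub>M sigma (space M) (F s)))"

definition predictable_sets ::
  "'w measure \<Rightarrow> (real \<Rightarrow> 'w set set) \<Rightarrow> real \<Rightarrow> real \<Rightarrow> (real \<times> 'w) set set" where
  "predictable_sets M F t T = sigma_sets ({t..<T} \<times> space M)
     ({{t} \<times> A | A. A \<in> F t} \<union> {{a<..b} \<times> A | a b A. t \<le> a \<and> a < b \<and> b < T \<and> A \<in> F a})"

definition predictable ::
  "'w measure \<Rightarrow> (real \<Rightarrow> 'w set set) \<Rightarrow> real \<Rightarrow> real \<Rightarrow> (real \<Rightarrow> 'w \<Rightarrow> real^'n) \<Rightarrow> bool" where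
  "predictable M F t T eta \<longleftrightarrow>
     (\<lambda>(r, \<omega>). eta r \<omega>) \<in> measurable (sigma ({t..<T} \<times> space M) (predictable_sets M F t T)) borel"

text \<open>Pathwise integral of eta against the counting process pi over (t,s].\<close>
definition jump_integral ::
  "(real \<Rightarrow> 'w \<Rightarrow> real^'n) \<Rightarrow> (real \<Rightarrow> 'w \<Rightarrow> real^'n) \<Rightarrow> real \<Rightarrow> real \<Rightarrow> 'w \<Rightarrow> 'n \<Rightarrow> real" where
  "jump_integral N eta t s \<omega> i =
     (\<Sum>r\<in>{r\<in>{t<..s}. N r \<omega> $ i \<noteq> left_lim (\<lambda>q. N q \<omega> $ i) r}.
        eta r \<omega> $ i * (N r \<omega> $ i - left_lim (\<lambda>q. N q \<omega> $ i) r))"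

text \<open>The solution of dX = - xi ds - eta dpi, X(t) = x.\<close>
definition liq_state ::
  "(real \<Rightarrow> 'w \<Rightarrow> real^'n) \<Rightarrow> real^'n \<Rightarrow> real \<Rightarrow> (real \<Rightarrow> 'w \<Rightarrow> real^'n) \<Rightarrow> (real \<Rightarrow> 'w \<Rightarrow> real^'n)
     \<Rightarrow> real \<Rightarrow> 'w \<Rightarrow> real^'n" where
  "liq_state N x t xi eta s \<omega> =
     (\<chi> i. x $ i - set_lebesgue_integral lborel {t..s} (\<lambda>r. xi r \<omega> $ i) - jump_integral N eta t s \<omega> i)"

definition liq_admissible ::
  "'w measure \<Rightarrow> (real \<Rightarrow> 'w \<Rightarrow> real^'n) \<Rightarrow> (real \<Rightarrow> 'w \<Rightarrow> real^'n) \<Rightarrow> ('n \<Rightarrow> real) \<Rightarrow> real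
     \<Rightarrow> real \<Rightarrow> real^'n \<Rightarrow> (real \<Rightarrow> 'w \<Rightarrow> real^'n) \<Rightarrow> (real \<Rightarrow> 'w \<Rightarrow> real^'n) \<Rightarrow> bool" where
  "liq_admissible M P N th T t x xi eta \<longleftrightarrow>
     progressive M (liq_filtration M P N) t T xi \<and>
     predictable M (liq_filtration M P N) t T eta \<and>
     (AE \<omega> in completion M. \<forall>s\<in>{t..<T}. \<forall>i. set_integrable lborel {t..s} (\<lambda>r. xi r \<omega> $ i)) \<and>
     (\<integral>\<^sup>+\<omega>. (\<integral>\<^sup>+r. indicator {t..<T} r * ennreal (norm (xi r \<omega>) ^ 4) \<partial>lborel) \<partial>completion M) < \<infinity> \<and>
     (\<integral>\<^sup>+\<omega>. (\<integral>\<^sup>+r. indicator {t..<T} r * ennreal (norm (eta r \<omega>) ^ 8) \<partial>lborel) \<partial>completion M) < \<infinity> \<and>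
     (\<forall>i. th i = 0 \<longrightarrow> (\<forall>r\<in>{t..<T}. \<forall>\<omega>\<in>space M. eta r \<omega> $ i = 0)) \<and>
     (AE \<omega> in completion M. ((\<lambda>s. liq_state N x t xi eta s \<omega>) \<longlongrightarrow> 0) (at_left T))"

definition liq_cost ::
  "'w measure \<Rightarrow> (real \<Rightarrow> 'w \<Rightarrow> real^'n) \<Rightarrow> real^'n^'n \<Rightarrow> real^'n^'n \<Rightarrow> real \<Rightarrow> real \<Rightarrow> real
     \<Rightarrow> real^'n \<Rightarrow> (real \<Rightarrow> 'w \<Rightarrow> real^'n) \<Rightarrow> (real \<Rightarrow> 'w \<Rightarrow> real^'n) \<Rightarrow> ennreal" where
  "liq_cost M N Lam Sig alpha T t x xi eta =
     (\<integral>\<^sup>+\<omega>. (\<integral>\<^sup>+r. indicator {t..<T} r *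
        ennreal (xi r \<omega> \<bullet> (Lam *v xi r \<omega>)
          + alpha * (liq_state N x t xi eta r \<omega> \<bullet> (Sig *v liq_state N x t xi eta r \<omega>))) \<partial>lborel)
      \<partial>completion M)"

definition liq_value ::
  "'w measure \<Rightarrow> (real \<Rightarrow> 'w \<Rightarrow> real^'n) \<Rightarrow> (real \<Rightarrow> 'w \<Rightarrow> real^'n) \<Rightarrow> ('n \<Rightarrow> real)
     \<Rightarrow> real^'n^'n \<Rightarrow> real^'n^'n \<Rightarrow> real \<Rightarrow> real \<Rightarrow> real \<Rightarrow> real^'n \<Rightarrow> ennreal" where
  "liq_value M P N th Lam Sig alpha T t x =
     (INF u \<in> {(xi, eta). liq_admissible M P N th T t x xi eta}.
        liq_cost M N Lam Sig alpha T t x (fst u) (snd u))"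

end

theory Submission
  imports Defs
begin

text \<open>Both claims hold strategy by strategy: the set of admissible strategies does not depend on
  the impact matrix, and the running cost of a fixed strategy is monotone in the quadratic form of
  the impact matrix. For (ii), raising \<open>\<lambda>\<^sub>i\<close> from \<open>a\<close> to \<open>b\<close> multiplies the quadratic form by at most
  \<open>b/a\<close>, and since \<open>b/a \<ge> 1\<close> the nonnegative risk term can absorb the same factor; hence
  \<open>v(b) \<le> (b/a) v(a)\<close>.\<close>

text \<open>Unlike \<open>nn_integral_cmult\<close>, this needs no measurability of \<open>f\<close>: the integrands of
  \<open>liq_cost\<close> are not known to be measurable.\<close>
lemma nn_integral_cmult_le:
  fixes c :: real
  assumes c: "0 < c"
  shows "(\<integral>\<^sup>+x. ennreal c * f x \<partial>M) \<le> ennreal c * integral\<^sup>N M f"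
  unfolding nn_integral_def[of M "\<lambda>x. ennreal c * f x"]
proof (rule SUP_least)
  fix g assume g: "g \<in> {g. simple_function M g \<and> g \<le> (\<lambda>x. ennreal c * f x)}"
  define h where "h = (\<lambda>x. ennreal (1/c) * g x)"
  have simple_h: "simple_function M h"
    unfolding h_def using g by (auto intro: simple_function_compose1[where g="\<lambda>y. ennreal (1/c) * y"])
  have inv_c: "ennreal (1/c) * ennreal c = 1"
    using c by (simp add: ennreal_mult[symmetric])
  have "h \<le> f"
  proof (rule le_funI)
    fix x
    have "h x \<le> ennreal (1/c) * (ennreal c * f x)"
      unfolding h_def using g by (auto simp: le_fun_def intro: mult_left_mono)
    also have "\<dots> = f x" by (simp add: mult.assoc[symmetric] inv_c)
    finally show "h x \<le> f x" .
  qed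
  have "g = (\<lambda>x. ennreal c * h x)"
    using c by (auto simp: h_def mult.assoc[symmetric] ennreal_mult[symmetric])
  then have "integral\<^sup>S M g = ennreal c * integral\<^sup>S M h"
    using simple_h by simp
  also have "\<dots> \<le> ennreal c * integral\<^sup>N M f"
    unfolding nn_integral_def using simple_h \<open>h \<le> f\<close> by (intro mult_left_mono SUP_upper) auto
  finally show "integral\<^sup>S M g \<le> ennreal c * integral\<^sup>N M f" .
qed

lemma ennreal_divide_le_divide_of_le_scaled:
  assumes "0 < a" "0 < b" and le: "x \<le> ennreal (b/a) * y"
  shows "x / ennreal b \<le> y / ennreal a"
proof -
  have "x / ennreal b = ennreal (1/b) * x"
    using assms by (simp add: divide_ennreal_def inverse_ennreal mult.commute inverse_eq_divide)
  also have "\<dots> \<le> ennreal (1/b) * (ennreal (b/a) * y)"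
    by (intro mult_left_mono le) simp
  also have "\<dots> = ennreal (1/a) * y"
    using assms by (simp add: mult.assoc[symmetric] ennreal_mult[symmetric])
  also have "\<dots> = y / ennreal a"
    using assms by (simp add: divide_ennreal_def inverse_ennreal mult.commute inverse_eq_divide)
  finally show ?thesis .
qed

lemma INF_cmult_le_ennreal:
  fixes c :: real
  assumes c: "0 < c"
  shows "(INF u\<in>A. ennreal c * f u) \<le> ennreal c * (INF u\<in>A. f u)"
proof -
  have inv_c: "ennreal c * ennreal (1/c) = 1"
    using c by (simp add: ennreal_mult[symmetric])
  have "ennreal (1/c) * (INF u\<in>A. ennreal c * f u) \<le> (INF u\<in>A. f u)"
  proof (rule INF_greatest)
    fix u assume "u \<in> A"
    then have "ennreal (1/c) * (INF u\<in>A. ennreal c * f u) \<le> ennreal (1/c) * (ennreal c * f u)"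
      by (intro mult_left_mono INF_lower) auto
    also have "\<dots> = f u"
      by (simp add: mult.assoc[symmetric] mult.commute[of "ennreal (1/c)"] inv_c)
    finally show "ennreal (1/c) * (INF u\<in>A. ennreal c * f u) \<le> f u" .
  qed
  then have "ennreal c * (ennreal (1/c) * (INF u\<in>A. ennreal c * f u)) \<le> ennreal c * (INF u\<in>A. f u)"
    by (rule mult_left_mono) simp
  then show ?thesis
    by (simp add: mult.assoc[symmetric] inv_c)
qed

lemma loewner_le_quadratic_form:
  assumes "loewner_le A B"
  shows "v \<bullet> (A *v v) \<le> v \<bullet> (B *v v)"
  using assms unfolding loewner_le_def nonneg_def_mat_def
  by (auto simp: matrix_vector_mult_diff_rdistrib inner_diff_right)

lemma quadratic_form_diag_mat: "v \<bullet> (diag_mat d *v v) = (\<Sum>j\<in>UNIV. d j * (v $ j)^2)"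
proof -
  have "(diag_mat d *v v) $ i = d i * v $ i" for i
    unfolding diag_mat_def matrix_vector_mult_def
    by (simp add: if_distrib[where f="\<lambda>z. z * _"] cong: if_cong)
  then show ?thesis
    unfolding inner_vec_def by (simp add: power2_eq_square mult_ac)
qed

lemma quadratic_form_diag_mat_update_le:
  fixes lam :: "'n::finite \<Rightarrow> real"
  assumes "\<forall>j. 0 \<le> lam j" and "0 < a" and "a \<le> b"
  shows "v \<bullet> (diag_mat (lam(i := b)) *v v) \<le> (b/a) * (v \<bullet> (diag_mat (lam(i := a)) *v v))"
  unfolding quadratic_form_diag_mat sum_distrib_left
proof (rule sum_mono)
  fix j
  have "1 \<le> b/a" using assms by simp
  then have "lam j * (v $ j)^2 \<le> (b/a) * (lam j * (v $ j)^2)"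
    using assms(1) by (simp add: mult_right_mono[of 1 "b/a", simplified])
  then show "(lam(i := b)) j * (v $ j)^2 \<le> (b/a) * ((lam(i := a)) j * (v $ j)^2)"
    using assms(2) by auto
qed

lemma liq_cost_mono_quadratic_form:
  assumes "\<And>v. v \<bullet> (Lam *v v) \<le> v \<bullet> (Lam' *v v)"
  shows "liq_cost M N Lam Sig alpha T t x xi eta \<le> liq_cost M N Lam' Sig alpha T t x xi eta"
  unfolding liq_cost_def
  by (intro nn_integral_mono mult_left_mono ennreal_leI) (auto simp: assms)

lemma liq_cost_le_scaled:
  assumes c: "1 \<le> c"
    and scaled: "\<And>v. v \<bullet> (Lam' *v v) \<le> c * (v \<bullet> (Lam *v v))"
    and Lam: "\<And>v. 0 \<le> v \<bullet> (Lam *v v)"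
    and Sig: "\<And>v. 0 \<le> alpha * (v \<bullet> (Sig *v v))"
  shows "liq_cost M N Lam' Sig alpha T t x xi eta \<le> ennreal c * liq_cost M N Lam Sig alpha T t x xi eta"
proof -
  have running_cost: "ennreal (v \<bullet> (Lam' *v v) + alpha * (w \<bullet> (Sig *v w)))
      \<le> ennreal c * ennreal (v \<bullet> (Lam *v v) + alpha * (w \<bullet> (Sig *v w)))" for v w
  proof -
    have "alpha * (w \<bullet> (Sig *v w)) \<le> c * (alpha * (w \<bullet> (Sig *v w)))"
      using mult_right_mono[OF c Sig] by simp
    then have "v \<bullet> (Lam' *v v) + alpha * (w \<bullet> (Sig *v w))
        \<le> c * (v \<bullet> (Lam *v v) + alpha * (w \<bullet> (Sig *v w)))"
      using scaled[of v] by (simp add: distrib_left)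
    then have "ennreal (v \<bullet> (Lam' *v v) + alpha * (w \<bullet> (Sig *v w)))
        \<le> ennreal (c * (v \<bullet> (Lam *v v) + alpha * (w \<bullet> (Sig *v w))))"
      by (rule ennreal_leI)
    also have "\<dots> = ennreal c * ennreal (v \<bullet> (Lam *v v) + alpha * (w \<bullet> (Sig *v w)))"
      using c Lam[of v] Sig[of w] by (intro ennreal_mult) simp_all
    finally show ?thesis .
  qed
  let ?g = "\<lambda>\<omega> r. indicator {t..<T} r * ennreal (xi r \<omega> \<bullet> (Lam *v xi r \<omega>)
      + alpha * (liq_state N x t xi eta r \<omega> \<bullet> (Sig *v liq_state N x t xi eta r \<omega>)))"
  have "liq_cost M N Lam' Sig alpha T t x xi eta
      \<le> (\<integral>\<^sup>+\<omega>. (\<integral>\<^sup>+r. ennreal c * ?g \<omega> r \<partial>lborel) \<partial>completion M)"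
    unfolding liq_cost_def
    by (intro nn_integral_mono)
      (use running_cost in \<open>auto simp: indicator_def\<close>)
  also have "\<dots> \<le> (\<integral>\<^sup>+\<omega>. ennreal c * (\<integral>\<^sup>+r. ?g \<omega> r \<partial>lborel) \<partial>completion M)"
    using c by (intro nn_integral_mono nn_integral_cmult_le) simp
  also have "\<dots> \<le> ennreal c * liq_cost M N Lam Sig alpha T t x xi eta"
    unfolding liq_cost_def using c by (intro nn_integral_cmult_le) simp
  finally show ?thesis .
qed

lemma liq_value_mono_quadratic_form:
  assumes "\<And>v. v \<bullet> (Lam *v v) \<le> v \<bullet> (Lam' *v v)"
  shows "liq_value M P N th Lam Sig alpha T t x \<le> liq_value M P N th Lam' Sig alpha T t x"
  unfolding liq_value_def
  by (intro INF_mono) (use liq_cost_mono_quadratic_form[OF assms] in blast)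

lemma liq_value_le_scaled:
  assumes c: "1 \<le> c"
    and "\<And>v. v \<bullet> (Lam' *v v) \<le> c * (v \<bullet> (Lam *v v))"
    and "\<And>v. 0 \<le> v \<bullet> (Lam *v v)"
    and "\<And>v. 0 \<le> alpha * (v \<bullet> (Sig *v v))"
  shows "liq_value M P N th Lam' Sig alpha T t x \<le> ennreal c * liq_value M P N th Lam Sig alpha T t x"
proof -
  let ?A = "{(xi, eta). liq_admissible M P N th T t x xi eta}"
  have "(INF u\<in>?A. liq_cost M N Lam' Sig alpha T t x (fst u) (snd u))
      \<le> (INF u\<in>?A. ennreal c * liq_cost M N Lam Sig alpha T t x (fst u) (snd u))"
    by (intro INF_mono) (use liq_cost_le_scaled[OF assms] in blast)
  also have "\<dots> \<le> ennreal c * (INF u\<in>?A. liq_cost M N Lam Sig alpha T t x (fst u) (snd u))"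
    using c by (intro INF_cmult_le_ennreal) simp
  finally show ?thesis
    unfolding liq_value_def .
qed

theorem proposition4p11:
  fixes M :: "'w measure" and P N :: "real \<Rightarrow> 'w \<Rightarrow> real^'n"
    and th :: "'n \<Rightarrow> real" and Sig :: "real^'n^'n"
    and alpha T t :: real and x :: "real^'n"
  assumes "0 < T" and "0 \<le> alpha" and "nonneg_def_mat Sig" and "\<forall>i. 0 \<le> th i"
    and "liq_model M T Sig th P N"
    and "0 \<le> t" and "t < T"
  shows "(\<forall>Lam Lam'. pos_def_mat Lam \<longrightarrow> pos_def_mat Lam' \<longrightarrow> loewner_le Lam Lam' \<longrightarrow>
            liq_value M P N th Lam Sig alpha T t x \<le> liq_value M P N th Lam' Sig alpha T t x)
       \<and> (\<forall>(lam :: 'n \<Rightarrow> real) i a b. (\<forall>j. 0 < lam j) \<longrightarrow> 0 < a \<longrightarrow> a \<le> b \<longrightarrow>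
            liq_value M P N th (diag_mat (lam(i := b))) Sig alpha T t x / ennreal b
              \<le> liq_value M P N th (diag_mat (lam(i := a))) Sig alpha T t x / ennreal a)"
proof (intro conjI allI impI)
  fix Lam Lam' :: "real^'n^'n"
  assume "loewner_le Lam Lam'"
  then show "liq_value M P N th Lam Sig alpha T t x \<le> liq_value M P N th Lam' Sig alpha T t x"
    by (intro liq_value_mono_quadratic_form loewner_le_quadratic_form)
next
  fix lam :: "'n \<Rightarrow> real" and i and a b :: real
  assume "\<forall>j. 0 < lam j" and "0 < a" and "a \<le> b"
  then have lam_a: "\<forall>j. 0 \<le> (lam(i := a)) j"
    by (simp add: less_imp_le)
  have "liq_value M P N th (diag_mat (lam(i := b))) Sig alpha T t x
      \<le> ennreal (b/a) * liq_value M P N th (diag_mat (lam(i := a))) Sig alpha T t x"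
  proof (rule liq_value_le_scaled)
    show "v \<bullet> (diag_mat (lam(i := b)) *v v) \<le> (b/a) * (v \<bullet> (diag_mat (lam(i := a)) *v v))" for v
      using \<open>\<forall>j. 0 < lam j\<close> \<open>0 < a\<close> \<open>a \<le> b\<close>
      by (intro quadratic_form_diag_mat_update_le) (simp_all add: less_imp_le)
    show "0 \<le> v \<bullet> (diag_mat (lam(i := a)) *v v)" for v
      unfolding quadratic_form_diag_mat using lam_a by (intro sum_nonneg) simp
    show "0 \<le> alpha * (v \<bullet> (Sig *v v))" for v
      using assms(2,3) by (simp add: nonneg_def_mat_def)
  qed (use \<open>0 < a\<close> \<open>a \<le> b\<close> in simp)
  then show "liq_value M P N th (diag_mat (lam(i := b))) Sig alpha T t x / ennreal b
      \<le> liq_value M P N th (diag_mat (lam(i := a))) Sig alpha T t x / ennreal a"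
    using \<open>0 < a\<close> \<open>a \<le> b\<close> by (intro ennreal_divide_le_divide_of_le_scaled) simp_all
qed

end
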